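(* Let $\{x_i,v_i\}_{i\in[N]}$ be the global solution of the delayed Cucker–Smale system described in the context, let $\beta>0$ and \[ G(t):=d_v(t)+\beta\int_{\max\{0,t-2\tau\}}^t e^{-(t-s)}\int_s^t\max_{i\in[N]}|\dot v_i(r)|\,\mathrm dr\,\mathrm ds,\qquad t\ge0. \] Then for all $i,j\in[N]$ and $t\ge2\tau$, \[ |v_j(t-\tau)-v_i(t-\sigma)|\le d_v(t-\tau)+\int_{t-\tau}^{t-\sigma}d_v(s-\tau)\,\mathrm ds+\beta^{-1}e^{2\tau}G(t-\sigma). \]
   Context: Let $N\ge2$, $d\ge1$ be integers, $[N]=\{1,\dots,N\}$, $0\le\sigma\le\tau$. Let $\psi:[0,\infty)\to[0,\infty)$ be continuous, nonincreasing, positive everywhere, with $\sup\psi\le1$. Given $x_i^0\in C^1([-\tau,0],\mathbb{R}^d)$, $v_i^0\in C([-\tau,0],\mathbb{R}^d)$ with $\frac{\mathrm d}{\mathrm dt}x_i^0=v_i^0$, $\{x_i,v_i\}$ is the global solution of $\dot x_i(t)=v_i(t)$, $\dot v_i(t)=\sum_{j\ne i}a_{ij}(t)(v_j(t-\tau)-v_i(t-\sigma))$ for $t>0$, with $a_{ij}(t)=\frac1{N-1}\psi(|x_i(t-\sigma)-x_j(t-\tau)|)$, and $x_i=x_i^0$, $v_i=v_i^0$ on $[-\tau,0]$ ($v_i$ continuously differentiable on $[0,\infty)$). $d_v(t):=\max_{i,j}|v_i(t)-v_j(t)|$. *)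

theory Defs
  imports "HOL-Analysis.Analysis"
begin

definition cs_weight ::
  "nat \<Rightarrow> (real \<Rightarrow> real) \<Rightarrow> real \<Rightarrow> real \<Rightarrow> (nat \<Rightarrow> real \<Rightarrow> real^'d) \<Rightarrow> nat \<Rightarrow> nat \<Rightarrow> real \<Rightarrow> real"
  where "cs_weight N \<psi> \<sigma> \<tau> x i j t = (1 / (real N - 1)) * \<psi> (norm (x i (t - \<sigma>) - x j (t - \<tau>)))"

definition cs_global_solution ::
  "nat \<Rightarrow> real \<Rightarrow> real \<Rightarrow> (real \<Rightarrow> real) \<Rightarrow> (nat \<Rightarrow> real \<Rightarrow> real^'d) \<Rightarrow> (nat \<Rightarrow> real \<Rightarrow> real^'d) \<Rightarrow> bool"
  where "cs_global_solution N \<sigma> \<tau> \<psi> x v \<longleftrightarrow>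
    (\<forall>i\<in>{1..N}. continuous_on {-\<tau>..} (v i)) \<and>
    (\<forall>i\<in>{1..N}. \<forall>t\<ge>-\<tau>. (x i has_vector_derivative v i t) (at t within {-\<tau>..})) \<and>
    (\<forall>i\<in>{1..N}. \<exists>v'. continuous_on {0..} v' \<and>
        (\<forall>t\<ge>0. (v i has_vector_derivative v' t) (at t within {0..}))) \<and>
    (\<forall>i\<in>{1..N}. \<forall>t>0. (v i has_vector_derivative
        (\<Sum>j\<in>{1..N} - {i}. cs_weight N \<psi> \<sigma> \<tau> x i j t *\<^sub>R (v j (t - \<tau>) - v i (t - \<sigma>)))) (at t))"

definition dv :: "nat \<Rightarrow> (nat \<Rightarrow> real \<Rightarrow> real^'d) \<Rightarrow> real \<Rightarrow> real"
  where "dv N v t = Max {norm (v i t - v j t) | i j. i \<in> {1..N} \<and> j \<in> {1..N}}"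

definition Gfun :: "nat \<Rightarrow> real \<Rightarrow> real \<Rightarrow> (nat \<Rightarrow> real \<Rightarrow> real^'d) \<Rightarrow> real \<Rightarrow> real"
  where "Gfun N \<tau> \<beta> v t = dv N v t + \<beta> * integral {max 0 (t - 2 * \<tau>)..t}
     (\<lambda>s. exp (-(t - s)) * integral {s..t}
        (\<lambda>r. Max ((\<lambda>i. norm (vector_derivative (v i) (at r within {0..}))) ` {1..N})))"

end

theory Submission
  imports Defs
begin

text \<open>Split v_j(t - \<tau>) - v_i(t - \<sigma>) at v_i(t - \<tau>); the first piece is at most d_v(t - \<tau>).
  For the second, the weights a_ik are nonnegative with sum at most 1, so the velocity equation
  gives |v_i'(s)| \<le> d_v(s - \<tau>) + |v_i(s - \<tau>) - v_i(s - \<sigma>)|, and the last term is at most the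
  integral of max_k |v_k'| over [s - \<tau>, t - \<sigma>]. Integrating over [t - \<tau>, t - \<sigma>] and shifting by
  \<tau>, the resulting double integral lives in the window [max 0 (t - \<sigma> - 2\<tau>), t - \<sigma>] of
  G(t - \<sigma>), on which the weight exp(-(t - \<sigma> - s)) is at least exp(-2\<tau>).\<close>

lemma at_within_atLeast_neq_bot:
  fixes a r :: real
  assumes "a \<le> r"
  shows "at r within {a..} \<noteq> bot"
proof -
  have "r islimpt {a..r + 1}"
    using assms by simp
  then have "r islimpt {a..}"
    by (rule islimpt_subset) auto
  then show ?thesis
    using trivial_limit_within by blast
qed

lemma continuous_on_Max:
  fixes f :: "'a \<Rightarrow> 'b::topological_space \<Rightarrow> real"
  assumes "finite A" "A \<noteq> {}" "\<And>a. a \<in> A \<Longrightarrow> continuous_on S (f a)"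
  shows "continuous_on S (\<lambda>t. Max ((\<lambda>a. f a t) ` A))"
  using assms
proof (induction A rule: finite_ne_induct)
  case (singleton a)
  then show ?case by simp
next
  case (insert a A)
  then have "continuous_on S (\<lambda>t. max (f a t) (Max ((\<lambda>a. f a t) ` A)))"
    by (intro continuous_on_max) auto
  with insert show ?case by simp
qed

lemma norm_sum_scaleR_le:
  fixes y :: "'a \<Rightarrow> 'b::real_normed_vector"
  assumes "\<And>k. k \<in> A \<Longrightarrow> 0 \<le> w k" "(\<Sum>k\<in>A. w k) \<le> 1"
    and "\<And>k. k \<in> A \<Longrightarrow> norm (y k) \<le> X" "0 \<le> X"
  shows "norm (\<Sum>k\<in>A. w k *\<^sub>R y k) \<le> X"
proof -
  have "norm (\<Sum>k\<in>A. w k *\<^sub>R y k) \<le> (\<Sum>k\<in>A. w k * norm (y k))"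
    using norm_sum[of "\<lambda>k. w k *\<^sub>R y k" A] assms(1) by simp
  also have "\<dots> \<le> (\<Sum>k\<in>A. w k * X)"
    using assms(1,3) by (intro sum_mono mult_left_mono) auto
  also have "\<dots> = (\<Sum>k\<in>A. w k) * X"
    by (simp add: sum_distrib_right)
  also have "\<dots> \<le> X"
    using mult_right_mono[OF assms(2,4)] by simp
  finally show ?thesis .
qed

lemma norm_diff_le_integral_of_deriv_bound:
  fixes f :: "real \<Rightarrow> 'a::banach"
  assumes "a \<le> b"
    and "\<And>s. s \<in> {a..b} \<Longrightarrow> (f has_vector_derivative f' s) (at s within {a..b})"
    and "g integrable_on {a..b}"
    and "\<And>s. s \<in> {a<..<b} \<Longrightarrow> norm (f' s) \<le> g s"
  shows "norm (f b - f a) \<le> integral {a..b} g"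
proof -
  have "(f' has_integral f b - f a) {a<..<b}"
    using fundamental_theorem_of_calculus[OF assms(1,2)] has_integral_Icc_iff_Ioo by blast
  then have "norm (f b - f a) = norm (integral {a<..<b} f')"
    by (simp add: integral_unique)
  also have "\<dots> \<le> integral {a<..<b} g"
    using \<open>(f' has_integral _) _\<close> assms(3,4) integrable_on_Icc_iff_Ioo
    by (intro integral_norm_bound_integral) auto
  finally show ?thesis
    by (simp add: integral_open_interval_real)
qed

lemma integral_le_exp_weighted_integral:
  fixes f :: "real \<Rightarrow> real"
  assumes "continuous_on {a..b} f" "\<And>s. s \<in> {a..b} \<Longrightarrow> 0 \<le> f s" "b - a \<le> c"
  shows "integral {a..b} f \<le> exp c * integral {a..b} (\<lambda>s. exp (-(b - s)) * f s)"
proof -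
  have "integral {a..b} f \<le> integral {a..b} (\<lambda>s. exp c * (exp (-(b - s)) * f s))"
  proof (rule integral_le)
    fix s assume s: "s \<in> {a..b}"
    have "1 \<le> exp c * exp (-(b - s))"
      using s assms(3) by (simp flip: exp_add)
    then have "1 * f s \<le> (exp c * exp (-(b - s))) * f s"
      using assms(2)[OF s] by (rule mult_right_mono)
    then show "f s \<le> exp c * (exp (-(b - s)) * f s)"
      by (simp add: mult.assoc)
  qed (use assms(1) in \<open>auto intro!: integrable_continuous_interval continuous_intros\<close>)
  then show ?thesis
    by simp
qed

lemma dv_eq_Max_image:
  "dv N v s = Max ((\<lambda>p. norm (v (fst p) s - v (snd p) s)) ` ({1..N} \<times> {1..N}))"
  unfolding dv_def by (rule arg_cong[where f = Max]) force

lemma norm_le_dv: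
  assumes "i \<in> {1..N}" "j \<in> {1..N}"
  shows "norm (v i s - v j s) \<le> dv N v s"
  unfolding dv_eq_Max_image using assms by (intro Max_ge) (auto intro!: image_eqI[where x = "(i, j)"])

lemma dv_nonneg:
  assumes "1 \<le> N"
  shows "0 \<le> dv N v s"
  using norm_le_dv[of 1 N 1 v s] assms by (simp add: order_trans[OF norm_ge_zero])

lemma continuous_on_dv:
  assumes "1 \<le> N" "\<And>i. i \<in> {1..N} \<Longrightarrow> continuous_on S (v i)"
  shows "continuous_on S (dv N v)"
  unfolding dv_eq_Max_image[abs_def] using assms
  by (intro continuous_on_Max continuous_on_norm continuous_on_diff) auto

definition max_accel :: "nat \<Rightarrow> (nat \<Rightarrow> real \<Rightarrow> 'a::real_normed_vector) \<Rightarrow> real \<Rightarrow> real"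
  where "max_accel N v r = Max ((\<lambda>i. norm (vector_derivative (v i) (at r within {0..}))) ` {1..N})"

lemma Gfun_eq_max_accel:
  "Gfun N \<tau> \<beta> v t = dv N v t
     + \<beta> * integral {max 0 (t - 2 * \<tau>)..t} (\<lambda>s. exp (-(t - s)) * integral {s..t} (max_accel N v))"
  unfolding Gfun_def max_accel_def[abs_def] ..

lemma norm_vector_derivative_le_max_accel:
  assumes "i \<in> {1..N}"
  shows "norm (vector_derivative (v i) (at r within {0..})) \<le> max_accel N v r"
  unfolding max_accel_def using assms by simp

lemma max_accel_nonneg:
  assumes "1 \<le> N"
  shows "0 \<le> max_accel N v r"
  using norm_vector_derivative_le_max_accel[of 1 N v r] assms by (simp add: order_trans[OF norm_ge_zero])

lemma cs_weight_nonneg: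
  assumes "1 \<le> N" "\<And>r. 0 \<le> r \<Longrightarrow> 0 \<le> \<psi> r"
  shows "0 \<le> cs_weight N \<psi> \<sigma> \<tau> x i j t"
  unfolding cs_weight_def using assms by simp

lemma sum_cs_weight_le_one:
  assumes "i \<in> {1..N}" "\<And>r. 0 \<le> r \<Longrightarrow> \<psi> r \<le> 1"
  shows "(\<Sum>k\<in>{1..N} - {i}. cs_weight N \<psi> \<sigma> \<tau> x i k t) \<le> 1"
proof -
  have "(\<Sum>k\<in>{1..N} - {i}. cs_weight N \<psi> \<sigma> \<tau> x i k t) \<le> real (card ({1..N} - {i})) * (1 / (real N - 1))"
    unfolding cs_weight_def using assms by (intro sum_bounded_above) (auto intro!: divide_right_mono)
  also have "\<dots> \<le> 1"
    using assms(1) by (cases "N = 1") auto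
  finally show ?thesis .
qed

lemma cs_global_solution_velocity_deriv:
  assumes "cs_global_solution N \<sigma> \<tau> \<psi> x v" "i \<in> {1..N}"
  shows "continuous_on {0..} (\<lambda>r. vector_derivative (v i) (at r within {0..}))"
    and "\<And>r. 0 \<le> r \<Longrightarrow>
      (v i has_vector_derivative vector_derivative (v i) (at r within {0..})) (at r within {0..})"
proof -
  obtain v' where cont: "continuous_on {0..} v'"
    and deriv: "\<And>r. 0 \<le> r \<Longrightarrow> (v i has_vector_derivative v' r) (at r within {0..})"
    using assms unfolding cs_global_solution_def by blast
  have eq: "vector_derivative (v i) (at r within {0..}) = v' r" if "0 \<le> r" for r
    by (rule vector_derivative_within[OF at_within_atLeast_neq_bot[OF that] deriv[OF that]])
  show "continuous_on {0..} (\<lambda>r. vector_derivative (v i) (at r within {0..}))"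
    using cont by (rule continuous_on_eq) (simp add: eq)
  show "(v i has_vector_derivative vector_derivative (v i) (at r within {0..})) (at r within {0..})"
    if "0 \<le> r" for r
    using deriv[OF that] eq[OF that] by simp
qed

lemma continuous_on_max_accel:
  assumes "cs_global_solution N \<sigma> \<tau> \<psi> x v" "1 \<le> N"
  shows "continuous_on {0..} (max_accel N v)"
  unfolding max_accel_def[abs_def] using assms
  by (intro continuous_on_Max continuous_on_norm cs_global_solution_velocity_deriv(1)) auto

lemma norm_velocity_diff_le_integral_max_accel:
  assumes "cs_global_solution N \<sigma> \<tau> \<psi> x v" "i \<in> {1..N}" "0 \<le> a" "a \<le> b"
  shows "norm (v i b - v i a) \<le> integral {a..b} (max_accel N v)"
proof (rule norm_diff_le_integral_of_deriv_bound[OF assms(4)])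
  show "(v i has_vector_derivative vector_derivative (v i) (at s within {0..})) (at s within {a..b})"
    if "s \<in> {a..b}" for s
    using cs_global_solution_velocity_deriv(2)[OF assms(1,2), of s] that assms(3)
    by (auto elim: has_vector_derivative_within_subset)
  have "continuous_on {0..} (max_accel N v)"
    using assms(1,2) by (intro continuous_on_max_accel) auto
  then show "max_accel N v integrable_on {a..b}"
    using assms(3) by (intro integrable_continuous_interval) (auto elim: continuous_on_subset)
qed (use norm_vector_derivative_le_max_accel[OF assms(2)] in blast)

lemma norm_velocity_deriv_le:
  assumes sol: "cs_global_solution N \<sigma> \<tau> \<psi> x v"
    and \<psi>: "\<And>r. 0 \<le> r \<Longrightarrow> 0 \<le> \<psi> r" "\<And>r. 0 \<le> r \<Longrightarrow> \<psi> r \<le> 1"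
    and i: "i \<in> {1..N}" and s: "0 < s"
  shows "norm (vector_derivative (v i) (at s within {0..}))
    \<le> dv N v (s - \<tau>) + norm (v i (s - \<tau>) - v i (s - \<sigma>))"
proof -
  define X where "X = dv N v (s - \<tau>) + norm (v i (s - \<tau>) - v i (s - \<sigma>))"
  have "\<forall>i\<in>{1..N}. \<forall>t>0. (v i has_vector_derivative
      (\<Sum>k\<in>{1..N} - {i}. cs_weight N \<psi> \<sigma> \<tau> x i k t *\<^sub>R (v k (t - \<tau>) - v i (t - \<sigma>)))) (at t)"
    using sol unfolding cs_global_solution_def by (elim conjE)
  then have ode: "(v i has_vector_derivative
      (\<Sum>k\<in>{1..N} - {i}. cs_weight N \<psi> \<sigma> \<tau> x i k s *\<^sub>R (v k (s - \<tau>) - v i (s - \<sigma>)))) (at s)"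
    using i s by blast
  have "vector_derivative (v i) (at s within {0..})
      = (\<Sum>k\<in>{1..N} - {i}. cs_weight N \<psi> \<sigma> \<tau> x i k s *\<^sub>R (v k (s - \<tau>) - v i (s - \<sigma>)))"
    by (rule vector_derivative_within[OF at_within_atLeast_neq_bot has_vector_derivative_at_within[OF ode]])
      (use s in simp)
  also have "norm \<dots> \<le> X"
  proof (rule norm_sum_scaleR_le)
    show "norm (v k (s - \<tau>) - v i (s - \<sigma>)) \<le> X" if "k \<in> {1..N} - {i}" for k
      using norm_triangle_ineq[of "v k (s - \<tau>) - v i (s - \<tau>)" "v i (s - \<tau>) - v i (s - \<sigma>)"]
        norm_le_dv[of k N i v "s - \<tau>"] that i
      unfolding X_def by simp
    show "0 \<le> X"
      using i unfolding X_def by (simp add: add_nonneg_nonneg dv_nonneg)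
    show "0 \<le> cs_weight N \<psi> \<sigma> \<tau> x i k s" for k
      using i \<psi>(1) by (intro cs_weight_nonneg) simp_all
    show "(\<Sum>k\<in>{1..N} - {i}. cs_weight N \<psi> \<sigma> \<tau> x i k s) \<le> 1"
      using i \<psi>(2) by (rule sum_cs_weight_le_one)
  qed
  finally show ?thesis
    unfolding X_def .
qed

lemma norm_velocity_increment_le:
  assumes sol: "cs_global_solution N \<sigma> \<tau> \<psi> x v"
    and \<psi>: "\<And>r. 0 \<le> r \<Longrightarrow> 0 \<le> \<psi> r" "\<And>r. 0 \<le> r \<Longrightarrow> \<psi> r \<le> 1"
    and delays: "0 \<le> \<sigma>" "\<sigma> \<le> \<tau>"
    and i: "i \<in> {1..N}" and ab: "\<tau> \<le> a" "a \<le> b"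
  shows "norm (v i b - v i a)
    \<le> integral {a..b} (\<lambda>s. dv N v (s - \<tau>)) + integral {a..b} (\<lambda>s. integral {s - \<tau>..b} (max_accel N v))"
proof -
  have N: "1 \<le> N"
    using i by simp
  have M_int: "max_accel N v integrable_on {c..d}" if "0 \<le> c" for c d
    using continuous_on_max_accel[OF sol N] that
    by (intro integrable_continuous_interval) (auto elim: continuous_on_subset)
  have cont_dv: "continuous_on {a..b} (\<lambda>s. dv N v (s - \<tau>))"
  proof (rule continuous_on_compose2[of "{-\<tau>..}" "dv N v"])
    show "continuous_on {-\<tau>..} (dv N v)"
      using sol N unfolding cs_global_solution_def by (intro continuous_on_dv) auto
  qed (use ab delays in \<open>auto intro!: continuous_intros\<close>)
  have cont_tail: "continuous_on {a..b} (\<lambda>s. integral {s - \<tau>..b} (max_accel N v))"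
    by (rule continuous_on_compose2[OF indefinite_integral_continuous_1'[OF M_int[of "a - \<tau>" b]]])
       (use ab delays in \<open>auto intro!: continuous_intros\<close>)
  have "norm (v i b - v i a)
      \<le> integral {a..b} (\<lambda>s. dv N v (s - \<tau>) + integral {s - \<tau>..b} (max_accel N v))"
  proof (rule norm_diff_le_integral_of_deriv_bound[OF ab(2)])
    show "(v i has_vector_derivative vector_derivative (v i) (at s within {0..})) (at s within {a..b})"
      if "s \<in> {a..b}" for s
      using cs_global_solution_velocity_deriv(2)[OF sol i, of s] that ab delays
      by (auto elim: has_vector_derivative_within_subset)
    show "(\<lambda>s. dv N v (s - \<tau>) + integral {s - \<tau>..b} (max_accel N v)) integrable_on {a..b}"
      using cont_dv cont_tail by (intro integrable_continuous_interval continuous_on_add)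
    fix s assume s: "s \<in> {a<..<b}"
    have "norm (v i (s - \<tau>) - v i (s - \<sigma>)) \<le> integral {s - \<tau>..s - \<sigma>} (max_accel N v)"
      using norm_velocity_diff_le_integral_max_accel[OF sol i, of "s - \<tau>" "s - \<sigma>"] s ab delays
      by (simp add: norm_minus_commute)
    also have "\<dots> \<le> integral {s - \<tau>..b} (max_accel N v)"
      using s ab delays M_int max_accel_nonneg[OF N] by (intro integral_subset_le) auto
    finally show "norm (vector_derivative (v i) (at s within {0..}))
        \<le> dv N v (s - \<tau>) + integral {s - \<tau>..b} (max_accel N v)"
      using norm_velocity_deriv_le[OF sol \<psi> i, of s] s ab delays by simp
  qed
  also have "\<dots> = integral {a..b} (\<lambda>s. dv N v (s - \<tau>))
      + integral {a..b} (\<lambda>s. integral {s - \<tau>..b} (max_accel N v))"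
    using cont_dv cont_tail by (intro integral_add integrable_continuous_interval)
  finally show ?thesis .
qed

lemma integral_max_accel_tail_le_Gfun:
  assumes sol: "cs_global_solution N \<sigma> \<tau> \<psi> x v" and N: "1 \<le> N"
    and "0 < \<beta>"
    and cd: "max 0 (T - 2 * \<tau>) \<le> c" "c \<le> d" "d \<le> T"
  shows "integral {c..d} (\<lambda>u. integral {u..T} (max_accel N v)) \<le> (1 / \<beta>) * exp (2 * \<tau>) * Gfun N \<tau> \<beta> v T"
proof -
  define a where "a = max 0 (T - 2 * \<tau>)"
  define F where "F u = integral {u..T} (max_accel N v)" for u
  have "max_accel N v integrable_on {a..T}"
    using continuous_on_max_accel[OF sol N] unfolding a_def
    by (intro integrable_continuous_interval) (auto elim: continuous_on_subset)
  then have F_cont: "continuous_on {a..T} F"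
    unfolding F_def by (rule indefinite_integral_continuous_1')
  have F_nonneg: "0 \<le> F u" if "u \<in> {a..T}" for u
    unfolding F_def using that continuous_on_max_accel[OF sol N] max_accel_nonneg[OF N]
    by (intro integral_nonneg integrable_continuous_interval) (auto simp: a_def elim: continuous_on_subset)
  have "integral {c..d} F \<le> integral {a..T} F"
    using cd F_nonneg F_cont unfolding a_def
    by (intro integral_subset_le integrable_continuous_interval) (auto elim: continuous_on_subset)
  also have "\<dots> \<le> exp (2 * \<tau>) * integral {a..T} (\<lambda>s. exp (-(T - s)) * F s)"
  proof (rule integral_le_exp_weighted_integral[OF F_cont F_nonneg])
    show "T - a \<le> 2 * \<tau>"
      using max.cobounded2[of 0 "T - 2 * \<tau>"] unfolding a_def by linarith
  qed
  also have "\<dots> = (1 / \<beta>) * exp (2 * \<tau>) * (Gfun N \<tau> \<beta> v T - dv N v T)"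
    using \<open>0 < \<beta>\<close> unfolding Gfun_eq_max_accel a_def F_def by simp
  also have "\<dots> \<le> (1 / \<beta>) * exp (2 * \<tau>) * Gfun N \<tau> \<beta> v T"
    using \<open>0 < \<beta>\<close> dv_nonneg[OF N, of v T] by (intro mult_left_mono) auto
  finally show ?thesis
    unfolding F_def .
qed

theorem lemma4p3:
  fixes N :: nat and \<sigma> \<tau> \<beta> :: real and \<psi> :: "real \<Rightarrow> real"
    and x v :: "nat \<Rightarrow> real \<Rightarrow> real^'d"
  assumes "N \<ge> 2"
    and "0 \<le> \<sigma>" and "\<sigma> \<le> \<tau>"
    and "continuous_on {0..} \<psi>"
    and "\<And>r s. 0 \<le> r \<Longrightarrow> r \<le> s \<Longrightarrow> \<psi> s \<le> \<psi> r"
    and "\<And>r. 0 \<le> r \<Longrightarrow> 0 < \<psi> r"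
    and "\<And>r. 0 \<le> r \<Longrightarrow> \<psi> r \<le> 1"
    and "cs_global_solution N \<sigma> \<tau> \<psi> x v"
    and "\<beta> > 0"
  shows "\<forall>i\<in>{1..N}. \<forall>j\<in>{1..N}. \<forall>t\<ge>2 * \<tau>.
     norm (v j (t - \<tau>) - v i (t - \<sigma>))
       \<le> dv N v (t - \<tau>) + integral {t - \<tau>..t - \<sigma>} (\<lambda>s. dv N v (s - \<tau>))
          + (1 / \<beta>) * exp (2 * \<tau>) * Gfun N \<tau> \<beta> v (t - \<sigma>)"
proof (intro ballI allI impI)
  \<comment> \<open>Only \<open>0 \<le> \<psi> \<le> 1\<close> enters.\<close>
  fix i j and t :: real
  assume i: "i \<in> {1..N}" and j: "j \<in> {1..N}" and t: "t \<ge> 2 * \<tau>"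
  define F where "F u = integral {u..t - \<sigma>} (max_accel N v)" for u
  have "norm (v j (t - \<tau>) - v i (t - \<sigma>)) \<le> dv N v (t - \<tau>) + norm (v i (t - \<sigma>) - v i (t - \<tau>))"
    using norm_triangle_ineq[of "v j (t - \<tau>) - v i (t - \<tau>)" "v i (t - \<tau>) - v i (t - \<sigma>)"]
      norm_le_dv[OF j i, of v "t - \<tau>"] by (simp add: norm_minus_commute)
  moreover have "norm (v i (t - \<sigma>) - v i (t - \<tau>))
      \<le> integral {t - \<tau>..t - \<sigma>} (\<lambda>s. dv N v (s - \<tau>)) + integral {t - \<tau>..t - \<sigma>} (\<lambda>s. F (s - \<tau>))"
    unfolding F_def using assms(2,3,6,7,8) i t
    by (intro norm_velocity_increment_le[where x = x and \<psi> = \<psi>]) (auto intro: less_imp_le)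
  moreover have "integral {t - \<tau>..t - \<sigma>} (\<lambda>s. F (s - \<tau>)) = integral {t - 2 * \<tau>..t - \<sigma> - \<tau>} F"
    using integral_shift_Icc_real[of "t - \<tau>" "t - \<sigma>" F "-\<tau>"] by (simp add: o_def algebra_simps)
  moreover have "integral {t - 2 * \<tau>..t - \<sigma> - \<tau>} F \<le> (1 / \<beta>) * exp (2 * \<tau>) * Gfun N \<tau> \<beta> v (t - \<sigma>)"
    unfolding F_def using assms(1,2,3,8,9) t
    by (intro integral_max_accel_tail_le_Gfun[where x = x and \<psi> = \<psi>]) auto
  ultimately show "norm (v j (t - \<tau>) - v i (t - \<sigma>))
       \<le> dv N v (t - \<tau>) + integral {t - \<tau>..t - \<sigma>} (\<lambda>s. dv N v (s - \<tau>))
          + (1 / \<beta>) * exp (2 * \<tau>) * Gfun N \<tau> \<beta> v (t - \<sigma>)"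
    by linarith
qed

end
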